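(* Let $\mathcal X$ be a set, let $\kappa:\mathcal X\to\mathbb N\cup\{\infty\}$ and $A_\theta:\mathcal X\to[0,1]$ be maps, and let $\oplus:\mathcal X\times\mathcal X\to\mathcal X$ be a binary operation. For $x_1,\dots,x_m\in\mathcal X$ with $m\ge 3$, write $x_1\oplus\cdots\oplus x_m$ for the right-associated composition $x_1\oplus(x_2\oplus(\cdots\oplus x_m))$. Suppose we are given a notion of independence for pairs $x,y\in\mathcal X$ and of joint independence for finite families in $\mathcal X$. Define \[ \mathcal X_{\mathrm{fin}}:=\{x\in\mathcal X:\kappa(x)<\infty\},\qquad K:=\kappa(\mathcal X_{\mathrm{fin}})\subseteq\mathbb N. \] Assume the following, on $\mathcal X_{\mathrm{fin}}$: (A1) (Accuracy–complexity monotonicity) For all $x,y\in\mathcal X_{\mathrm{fin}}$, if $\kappa(x)\le\kappa(y)$ then $A_\theta(x)\ge A_\theta(y)$. (A2) (Compositionality) For all independent $x,y\in\mathcal X_{\mathrm{fin}}$, \[ \kappa(x\oplus y)=\kappa(x)+\kappa(y),\qquad A_\theta(x\oplus y)=A_\theta(x)\cdot A_\theta(y). \] (A3) For every $u\in K$ and every $m\in\mathbb N$ ($m\ge1$), there exist $x_1,\dots,x_m\in\mathcal X_{\mathrm{fin}}$ with $\kappa(x_i)=u$ for all $i$ and $\{x_1,\dots,x_m\}$ jointly independent; consequently $x_1\oplus\cdots\oplus x_m$ is valid and \[ \kappa(x_1\oplus\cdots\oplus x_m)=mu\in K,\qquad A_\theta(x_1\oplus\cdots\oplus x_m)=\prod_{i=1}^m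 A_\theta(x_i). \] Then there exists $\lambda_\theta\ge 0$ such that for all $x\in\mathcal X_{\mathrm{fin}}$ with $0<A_\theta(x)\le 1$, \[ A_\theta(x)=\exp\!\big(-\lambda_\theta\,\kappa(x)\big). \]
   Context: Interpretation (not needed for the statement): $\mathcal X$ is a space of questions, $\kappa(x)$ is the complexity of question $x$ (minimal number of primitive solution steps), $A_\theta(x)\in[0,1]$ is the probability that model $\theta$ answers $x$ correctly, and $x\oplus y$ is the composite question formed by concatenating $x$ and $y$ with a connector prompt. Independence of $x,y$ is the abstract relation under which (A2) applies; joint independence of a finite family is the abstract property used in (A3), whose stated consequence (validity of the composition, additivity of $\kappa$ and multiplicativity of $A_\theta$ over the right-associated composition) is part of the assumption. *)

theory Defs
  imports Complex_Main "HOL-Library.Extended_Nat"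
begin

fun rcomp :: "('x \<Rightarrow> 'x \<Rightarrow> 'x) \<Rightarrow> 'x list \<Rightarrow> 'x" where
  "rcomp f [] = undefined"
| "rcomp f [x] = x"
| "rcomp f (x # y # xs) = f x (rcomp f (y # xs))"

definition Xfin :: "('x \<Rightarrow> enat) \<Rightarrow> 'x set" where
  "Xfin \<kappa> = {x. \<kappa> x < \<infinity>}"

definition Kset :: "('x \<Rightarrow> enat) \<Rightarrow> nat set" where
  "Kset \<kappa> = {n. \<exists>x \<in> Xfin \<kappa>. \<kappa> x = enat n}"

end

theory Submission
  imports Defs
begin

(* By (A1) the accuracy of a finite-complexity question depends only on its complexity,
   A x = a (kappa x), and by (A3) a (m * u) = a u ^ m. Hence g = ln a satisfies
   g (m * u) = m * g u, and comparing g (u * v) = v * g u = u * g v shows that g u / u is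
   a constant -lambda. *)

lemma linear_if_homogeneous:
  fixes g :: "nat \<Rightarrow> real"
  assumes hom: "\<And>u m. u \<in> P \<Longrightarrow> m \<ge> 1 \<Longrightarrow> m * u \<in> P \<and> g (m * u) = real m * g u"
  shows "\<exists>c. \<forall>u \<in> P. g u = c * real u"
proof -
  have g0: "g 0 = 0" if "0 \<in> P"
    using hom[OF that, of 2] by simp
  show ?thesis
  proof (cases "\<exists>u0 \<in> P. u0 > 0")
    case True
    then obtain u0 where u0: "u0 \<in> P" "u0 > 0" by blast
    have "g u = g u0 / real u0 * real u" if u: "u \<in> P" for u
    proof (cases "u = 0")
      case True
      then show ?thesis using g0 u by simp
    next
      case False
      have "real u0 * g u = g (u0 * u)" using hom[OF u, of u0] u0(2) by simp
      also have "\<dots> = real u * g u0" using hom[OF u0(1), of u] False by (simp add: mult.commute)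
      finally show ?thesis using u0(2) by (simp add: field_simps)
    qed
    then show ?thesis by blast
  next
    case False
    then show ?thesis using g0 by (intro exI[of _ 0]) auto
  qed
qed

lemma exp_if_power_homogeneous:
  fixes a :: "nat \<Rightarrow> real"
  assumes range: "\<And>u. u \<in> P \<Longrightarrow> 0 < a u \<and> a u \<le> 1"
    and hom: "\<And>u m. u \<in> P \<Longrightarrow> m \<ge> 1 \<Longrightarrow> m * u \<in> P \<and> a (m * u) = a u ^ m"
  shows "\<exists>lam \<ge> 0. \<forall>u \<in> P. a u = exp (- lam * real u)"
proof -
  have "\<exists>c. \<forall>u \<in> P. ln (a u) = c * real u"
    by (rule linear_if_homogeneous) (use hom range in \<open>simp add: ln_realpow\<close>)
  then obtain c where c: "\<And>u. u \<in> P \<Longrightarrow> ln (a u) = c * real u" by blast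
  \<comment> \<open>c \<le> 0 unless P \<subseteq> {0}, so max 0 (-c) works in either case\<close>
  have "ln (a u) = - max 0 (- c) * real u" if u: "u \<in> P" for u
  proof -
    have "c * real u \<le> 0" using c[OF u] range[OF u] by (metis ln_le_zero_iff)
    then show ?thesis using c[OF u] by (cases "u = 0") (auto simp: mult_le_0_iff)
  qed
  then have "\<forall>u \<in> P. a u = exp (- max 0 (- c) * real u)"
    using range by (metis exp_ln)
  then show ?thesis by (intro exI[of _ "max 0 (- c)"]) simp
qed

lemma accuracy_factors_through_complexity:
  fixes \<kappa> :: "'x \<Rightarrow> enat" and A :: "'x \<Rightarrow> real"
  assumes antitone: "\<And>x y. x \<in> Xfin \<kappa> \<Longrightarrow> y \<in> Xfin \<kappa> \<Longrightarrow> \<kappa> x \<le> \<kappa> y \<Longrightarrow> A x \<ge> A y"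
  shows "\<exists>a. \<forall>x \<in> Xfin \<kappa>. A x = a (the_enat (\<kappa> x))"
proof -
  define a where "a u = A (SOME x. x \<in> Xfin \<kappa> \<and> \<kappa> x = enat u)" for u
  have "A x = a (the_enat (\<kappa> x))" if x: "x \<in> Xfin \<kappa>" for x
  proof -
    let ?y = "SOME y. y \<in> Xfin \<kappa> \<and> \<kappa> y = \<kappa> x"
    have "\<kappa> x = enat (the_enat (\<kappa> x))" using x by (auto simp: Xfin_def)
    moreover have "?y \<in> Xfin \<kappa> \<and> \<kappa> ?y = \<kappa> x" by (rule someI[of _ x]) (use x in simp)
    ultimately show ?thesis using antitone[OF x, of ?y] antitone[of ?y x] x by (simp add: a_def)
  qed
  then show ?thesis by blast
qed

lemma power_of_repeated_composition:
  fixes \<kappa> :: "'x \<Rightarrow> enat" and A :: "'x \<Rightarrow> real" and a :: "nat \<Rightarrow> real"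
  assumes a: "\<And>x. x \<in> Xfin \<kappa> \<Longrightarrow> A x = a (the_enat (\<kappa> x))"
    and xs: "length xs = m" "set xs \<subseteq> Xfin \<kappa>" "\<forall>x \<in> set xs. \<kappa> x = enat u"
      "\<kappa> (rcomp oplus xs) = enat (m * u)" "A (rcomp oplus xs) = (\<Prod>i<m. A (xs ! i))"
  shows "a (m * u) = a u ^ m"
proof -
  have "A (xs ! i) = a u" if "i < m" for i
  proof -
    have "xs ! i \<in> set xs" using that xs(1) by simp
    then show ?thesis using xs(2,3) a[of "xs ! i"] by auto
  qed
  then have "A (rcomp oplus xs) = a u ^ m" using xs(5) by simp
  moreover have "rcomp oplus xs \<in> Xfin \<kappa>" using xs(4) by (simp add: Xfin_def)
  ultimately show ?thesis using a xs(4) by simp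
qed

theorem proposition2:
  fixes \<kappa> :: "'x \<Rightarrow> enat"
    and A :: "'x \<Rightarrow> real"
    and oplus :: "'x \<Rightarrow> 'x \<Rightarrow> 'x"
    and indep :: "'x \<Rightarrow> 'x \<Rightarrow> bool"
    and jindep :: "'x list \<Rightarrow> bool"
  assumes A_range: "\<And>x. 0 \<le> A x \<and> A x \<le> 1"
    and A1: "\<And>x y. x \<in> Xfin \<kappa> \<Longrightarrow> y \<in> Xfin \<kappa> \<Longrightarrow> \<kappa> x \<le> \<kappa> y \<Longrightarrow> A x \<ge> A y"
    and A2: "\<And>x y. x \<in> Xfin \<kappa> \<Longrightarrow> y \<in> Xfin \<kappa> \<Longrightarrow> indep x y \<Longrightarrow>
               \<kappa> (oplus x y) = \<kappa> x + \<kappa> y \<and> A (oplus x y) = A x * A y"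
    and A3: "\<And>u m. u \<in> Kset \<kappa> \<Longrightarrow> m \<ge> 1 \<Longrightarrow>
               \<exists>xs. length xs = m \<and> set xs \<subseteq> Xfin \<kappa> \<and> (\<forall>x \<in> set xs. \<kappa> x = enat u)
                  \<and> jindep xs
                  \<and> \<kappa> (rcomp oplus xs) = enat (m * u) \<and> m * u \<in> Kset \<kappa>
                  \<and> A (rcomp oplus xs) = (\<Prod>i<m. A (xs ! i))"
  shows "\<exists>lam::real. lam \<ge> 0 \<and>
           (\<forall>x \<in> Xfin \<kappa>. 0 < A x \<and> A x \<le> 1 \<longrightarrow> A x = exp (- lam * real (the_enat (\<kappa> x))))"
proof -
  obtain a where a: "\<And>x. x \<in> Xfin \<kappa> \<Longrightarrow> A x = a (the_enat (\<kappa> x))"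
    using accuracy_factors_through_complexity[of \<kappa> A, OF A1] by blast
  have range: "0 < a u \<and> a u \<le> 1" if u: "u \<in> Kset \<kappa>" and pos: "0 < a u" for u
  proof -
    obtain x where "x \<in> Xfin \<kappa>" "\<kappa> x = enat u" using u by (auto simp: Kset_def)
    then show ?thesis using pos A_range[of x] a[of x] by simp
  qed
  have power: "m * u \<in> Kset \<kappa> \<and> a (m * u) = a u ^ m"
    if u: "u \<in> Kset \<kappa>" and m: "m \<ge> 1" for u m
  proof -
    obtain xs where xs: "length xs = m" "set xs \<subseteq> Xfin \<kappa>" "\<forall>x \<in> set xs. \<kappa> x = enat u"
      "\<kappa> (rcomp oplus xs) = enat (m * u)" "m * u \<in> Kset \<kappa>"
      "A (rcomp oplus xs) = (\<Prod>i<m. A (xs ! i))"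
      using A3[OF u m] by blast
    have "a (m * u) = a u ^ m"
      using a xs(1-4,6) by (rule power_of_repeated_composition)
    then show ?thesis using xs(5) by simp
  qed
  obtain lam where "lam \<ge> 0"
    and lam: "\<And>u. u \<in> {u \<in> Kset \<kappa>. 0 < a u} \<Longrightarrow> a u = exp (- lam * real u)"
    using exp_if_power_homogeneous[of "{u \<in> Kset \<kappa>. 0 < a u}" a] range power by auto
  have "A x = exp (- lam * real (the_enat (\<kappa> x)))" if x: "x \<in> Xfin \<kappa>" "0 < A x" for x
  proof -
    have "the_enat (\<kappa> x) \<in> Kset \<kappa>" using x(1) by (auto simp: Kset_def Xfin_def)
    then show ?thesis using lam a[OF x(1)] x(2) by simp
  qed
  then show ?thesis using \<open>lam \<ge> 0\<close> by blast
qed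

end
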